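(* Let $\mathcal X$ be a nominal set and $N\subseteq\mathbb A$ finite. Let $b\in\mathbb A\setminus N$, and let $X\subseteq\mathcal X$ with $\mathrm{supp}(X)\subseteq N\cup\{b\}$. Then there exists an injective function $$f:\ \mathrm{orbs}_N\Big(\bigcup_{a\in\mathbb A\setminus N}(a\ b)\cdot X\Big)\to\mathrm{orbs}_{N\cup\{b\}}(X).$$
   Context: Fix a countably infinite set $\mathbb A$ of names. $\mathrm{Perm}$ is the group of finite permutations of $\mathbb A$. $(a\ b)$ denotes the transposition swapping $a$ and $b$ and fixing all other names. A nominal set is a set with a $\mathrm{Perm}$-action in which every element has finite support. $\mathrm{supp}$ denotes the least finite supporting set. Permutations act on subsets pointwise, $\pi\cdot X=\{\pi\cdot x\mid x\in X\}$. For finite $N\subseteq\mathbb A$ and $x\in\mathcal X$: - $\mathrm{orb}_N(x)=\{\pi\cdot x\mid\pi\in\mathrm{Perm},\ \pi(a)=a\ \forall a\in N\}$. For $S\subseteq\mathcal X$: - $\mathrm{orbs}_N(S)=\{\mathrm{orb}_N(x)\mid x\in S\}$. *)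

theory Defs
  imports "HOL-Combinatorics.Perm"
begin

text \<open>Atoms: the countably infinite set of names is modelled by the type nat.
  Perm = the group of finite permutations of names, i.e. the type nat perm
  (bijections moving only finitely many names).\<close>

definition perm_action :: "(nat perm \<Rightarrow> 'x \<Rightarrow> 'x) \<Rightarrow> bool" where
  "perm_action act \<longleftrightarrow> (\<forall>x. act 1 x = x) \<and>
     (\<forall>p q x. act (p * q) x = act p (act q x))"

definition supports :: "(nat perm \<Rightarrow> 'x \<Rightarrow> 'x) \<Rightarrow> nat set \<Rightarrow> 'x \<Rightarrow> bool" where
  "supports act S x \<longleftrightarrow> (\<forall>p. (\<forall>a\<in>S. Perm.apply p a = a) \<longrightarrow> act p x = x)"

definition fin_supp :: "(nat perm \<Rightarrow> 'x \<Rightarrow> 'x) \<Rightarrow> 'x \<Rightarrow> bool" where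
  "fin_supp act x \<longleftrightarrow> (\<exists>S. finite S \<and> supports act S x)"

definition nominal :: "(nat perm \<Rightarrow> 'x \<Rightarrow> 'x) \<Rightarrow> bool" where
  "nominal act \<longleftrightarrow> perm_action act \<and> (\<forall>x. fin_supp act x)"

definition supp :: "(nat perm \<Rightarrow> 'x \<Rightarrow> 'x) \<Rightarrow> 'x \<Rightarrow> nat set" where
  "supp act x = (THE S. finite S \<and> supports act S x \<and>
                   (\<forall>T. finite T \<and> supports act T x \<longrightarrow> S \<subseteq> T))"

definition set_act :: "(nat perm \<Rightarrow> 'x \<Rightarrow> 'x) \<Rightarrow> nat perm \<Rightarrow> 'x set \<Rightarrow> 'x set" where
  "set_act act p X = act p ` X"

definition orb :: "(nat perm \<Rightarrow> 'x \<Rightarrow> 'x) \<Rightarrow> nat set \<Rightarrow> 'x \<Rightarrow> 'x set" where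
  "orb act N x = {act p x | p. \<forall>a\<in>N. Perm.apply p a = a}"

definition orbs :: "(nat perm \<Rightarrow> 'x \<Rightarrow> 'x) \<Rightarrow> nat set \<Rightarrow> 'x set \<Rightarrow> 'x set set" where
  "orbs act N S = orb act N ` S"

end

theory Submission
  imports Defs
begin

text \<open>Pick \<open>a\<^sub>0 \<notin> N\<close>. For \<open>a, b \<notin> N\<close>, the permutation \<open>(a b)(a\<^sub>0 b)\<close> fixes \<open>N\<close>,
  and conjugating by \<open>(a b)\<close> turns a permutation fixing \<open>N \<union> {b}\<close> into one fixing \<open>N\<close>.
  Hence \<open>x \<mapsto> orb\<^sub>N((a\<^sub>0 b)\<cdot>x)\<close> maps \<open>X\<close> onto the \<open>N\<close>-orbits of \<open>\<Union>\<^sub>a (a b)\<cdot>X\<close> and is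
  constant on \<open>(N \<union> {b})\<close>-orbits. It therefore induces a surjection from the
  \<open>(N \<union> {b})\<close>-orbits of \<open>X\<close> onto those \<open>N\<close>-orbits, and any section of it is an injection
  the other way. This holds for every \<open>Perm\<close>-action.\<close>

lemma ex_inj_on_image_if_factors:
  assumes "\<And>x y. x \<in> S \<Longrightarrow> y \<in> S \<Longrightarrow> G x = G y \<Longrightarrow> F x = F y"
  shows "\<exists>f. inj_on f (F ` S) \<and> f ` F ` S \<subseteq> G ` S"
proof (intro exI conjI)
  let ?f = "\<lambda>t. G (inv_into S F t)"
  show "inj_on ?f (F ` S)"
  proof (rule inj_onI)
    fix s t assume s: "s \<in> F ` S" and t: "t \<in> F ` S" and "?f s = ?f t"
    then have "F (inv_into S F s) = F (inv_into S F t)"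
      by (intro assms inv_into_into)
    then show "s = t"
      using s t by (simp add: f_inv_into_f)
  qed
  show "?f ` F ` S \<subseteq> G ` S"
    by (auto intro: inv_into_into)
qed

lemma perm_action_one: "perm_action act \<Longrightarrow> act 1 x = x"
  unfolding perm_action_def by blast

lemma perm_action_times: "perm_action act \<Longrightarrow> act (p * q) x = act p (act q x)"
  unfolding perm_action_def by blast

lemma perm_action_swap_swap:
  "perm_action act \<Longrightarrow> act (swap a b) (act (swap a b) x) = x"
  by (metis perm_action_one perm_action_times swap_self)

lemma apply_inverse_fixed:
  assumes "Perm.apply p a = a"
  shows "Perm.apply (inverse p) a = a"
proof -
  have "Perm.apply (inverse p) a = Perm.apply (inverse p) (Perm.apply p a)"
    using assms by simp
  also have "\<dots> = a"
    by (simp only: apply_sequence perm.left_inverse apply_one id_apply)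
  finally show ?thesis .
qed

lemma orbI: "\<forall>a\<in>N. Perm.apply p a = a \<Longrightarrow> act p x \<in> orb act N x"
  unfolding orb_def by blast

lemma orbE:
  assumes "y \<in> orb act N x"
  obtains p where "y = act p x" and "\<forall>a\<in>N. Perm.apply p a = a"
  using assms unfolding orb_def by blast

lemma orb_self: "perm_action act \<Longrightarrow> x \<in> orb act N x"
  using orbI[of N 1 act x] by (simp add: perm_action_one)

lemma orb_subset_if_mem:
  assumes act: "perm_action act" and "y \<in> orb act N x"
  shows "orb act N y \<subseteq> orb act N x"
proof
  fix z assume "z \<in> orb act N y"
  then obtain q where z: "z = act q y" and q: "\<forall>a\<in>N. Perm.apply q a = a"
    by (rule orbE)
  obtain p where y: "y = act p x" and p: "\<forall>a\<in>N. Perm.apply p a = a"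
    using \<open>y \<in> orb act N x\<close> by (rule orbE)
  have "z = act (q * p) x"
    by (simp add: z y perm_action_times[OF act])
  moreover have "\<forall>a\<in>N. Perm.apply (q * p) a = a"
    using p q by (simp add: apply_times)
  ultimately show "z \<in> orb act N x"
    using orbI by metis
qed

lemma orb_sym:
  assumes act: "perm_action act" and "y \<in> orb act N x"
  shows "x \<in> orb act N y"
proof -
  obtain p where y: "y = act p x" and p: "\<forall>a\<in>N. Perm.apply p a = a"
    using \<open>y \<in> orb act N x\<close> by (rule orbE)
  have "x = act (inverse p) y"
    by (simp add: y perm_action_times[OF act, symmetric] perm_action_one[OF act])
  moreover have "\<forall>a\<in>N. Perm.apply (inverse p) a = a"
    using p by (simp add: apply_inverse_fixed)
  ultimately show ?thesis
    using orbI by metis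
qed

lemma orb_eq_if_mem:
  "perm_action act \<Longrightarrow> y \<in> orb act N x \<Longrightarrow> orb act N y = orb act N x"
  by (meson orb_subset_if_mem orb_sym orb_self subset_antisym)

lemma orb_act_eq:
  "perm_action act \<Longrightarrow> \<forall>a\<in>N. Perm.apply p a = a \<Longrightarrow> orb act N (act p x) = orb act N x"
  by (simp add: orbI orb_eq_if_mem)

lemma apply_swap_fixes:
  "a \<notin> N \<Longrightarrow> b \<notin> N \<Longrightarrow> c \<in> N \<Longrightarrow> Perm.apply (swap a b) c = c"
  by (metis apply_swap_same)

lemma orb_act_swap_indep:
  assumes act: "perm_action act" and "a \<notin> N" "a' \<notin> N" "b \<notin> N"
  shows "orb act N (act (swap a b) x) = orb act N (act (swap a' b) x)"
proof -
  have "act (swap a b) x = act (swap a b * swap a' b) (act (swap a' b) x)"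
    by (simp add: perm_action_times[OF act] perm_action_swap_swap[OF act])
  also have "orb act N \<dots> = orb act N (act (swap a' b) x)"
    using assms by (intro orb_act_eq[OF act]) (simp add: apply_times apply_swap_fixes)
  finally show ?thesis .
qed

lemma orb_act_swap_cong:
  assumes act: "perm_action act" and "a \<notin> N" "b \<notin> N"
    and "y \<in> orb act (N \<union> {b}) x"
  shows "orb act N (act (swap a b) y) = orb act N (act (swap a b) x)"
proof -
  obtain r where y: "y = act r x" and r: "\<forall>c\<in>N \<union> {b}. Perm.apply r c = c"
    using \<open>y \<in> orb act (N \<union> {b}) x\<close> by (rule orbE)
  have "act (swap a b) y = act (swap a b * r * swap a b) (act (swap a b) x)"
    by (simp add: y perm_action_times[OF act] perm_action_swap_swap[OF act])
  also have "orb act N \<dots> = orb act N (act (swap a b) x)"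
    using assms r by (intro orb_act_eq[OF act]) (simp add: apply_times apply_swap_fixes)
  finally show ?thesis .
qed

lemma orbs_Union_swap:
  assumes act: "perm_action act" and "a\<^sub>0 \<notin> N" "b \<notin> N"
  shows "orbs act N (\<Union>a\<in>- N. set_act act (swap a b) X)
           = (\<lambda>x. orb act N (act (swap a\<^sub>0 b) x)) ` X"
proof -
  have "orbs act N (\<Union>a\<in>- N. set_act act (swap a b) X)
          = (\<Union>a\<in>- N. (\<lambda>x. orb act N (act (swap a b) x)) ` X)"
    unfolding orbs_def set_act_def by (simp only: image_UN image_image)
  also have "\<dots> = (\<Union>a\<in>- N. (\<lambda>x. orb act N (act (swap a\<^sub>0 b) x)) ` X)"
    using assms by (intro SUP_cong image_cong refl orb_act_swap_indep[OF act]) auto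
  also have "\<dots> = (\<lambda>x. orb act N (act (swap a\<^sub>0 b) x)) ` X"
    using \<open>a\<^sub>0 \<notin> N\<close> by blast
  finally show ?thesis .
qed

theorem mainTheorem6:
  fixes act :: "nat perm \<Rightarrow> 'x \<Rightarrow> 'x"
    and N :: "nat set" and b :: nat and X :: "'x set"
  assumes "nominal act"
    and "finite N"
    and "b \<notin> N"
    and "fin_supp (set_act act) X"
    and "supp (set_act act) X \<subseteq> N \<union> {b}"
  shows "\<exists>f. inj_on f (orbs act N (\<Union>a\<in>- N. set_act act (swap a b) X)) \<and>
             f ` orbs act N (\<Union>a\<in>- N. set_act act (swap a b) X) \<subseteq> orbs act (N \<union> {b}) X"
proof -
  have act: "perm_action act"
    using \<open>nominal act\<close> unfolding nominal_def by blast
  obtain a\<^sub>0 :: nat where "a\<^sub>0 \<notin> N"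
    using \<open>finite N\<close> ex_new_if_finite infinite_UNIV_nat by blast
  define F where "F x = orb act N (act (swap a\<^sub>0 b) x)" for x
  have "\<exists>f. inj_on f (F ` X) \<and> f ` F ` X \<subseteq> orb act (N \<union> {b}) ` X"
  proof (rule ex_inj_on_image_if_factors)
    fix x y assume "orb act (N \<union> {b}) x = orb act (N \<union> {b}) y"
    then have "y \<in> orb act (N \<union> {b}) x"
      using orb_self[OF act] by metis
    then show "F x = F y"
      unfolding F_def using orb_act_swap_cong[OF act \<open>a\<^sub>0 \<notin> N\<close> \<open>b \<notin> N\<close>] by simp
  qed
  moreover have "orbs act N (\<Union>a\<in>- N. set_act act (swap a b) X) = F ` X"
    unfolding F_def using orbs_Union_swap[OF act \<open>a\<^sub>0 \<notin> N\<close> \<open>b \<notin> N\<close>] .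
  ultimately show ?thesis
    unfolding orbs_def[of act "N \<union> {b}"] by simp
qed

end
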